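(* Let $f:\mathbb{R}^d\to\mathbb{R}^m$ be a function such that (1) $f$ is continuous at every point of $\mathbb{R}^d$; (2) $f$ is piecewise Lipschitz with exceptional set $\Theta$; (3) for all $x,y\in\mathbb{R}^d$ and $\eta>0$ there exists a continuous curve $\gamma$ from $x$ to $y$ with $\ell(\gamma)<\|x-y\|+\eta$ that intersects $\Theta$ in only finitely many points. Then $f$ is Lipschitz on $\mathbb{R}^d$ with respect to the Euclidean metric, with the same Lipschitz constant as the intrinsic Lipschitz constant of $f|_{\mathbb{R}^d\setminus\Theta}$.
   Context: Length of a continuous curve $\gamma:[0,1]\to\mathbb{R}^d$: $\ell(\gamma)=\sup\sum_{k=1}^n\|\gamma(t_k)-\gamma(t_{k-1})\|$ over all partitions $0\le t_0<\dots<t_n\le1$. For $A\subseteq\mathbb{R}^d$, the intrinsic metric is $\rho(x,y)=\inf\{\ell(\gamma):\gamma:[0,1]\to A\text{ continuous},\gamma(0)=x,\gamma(1)=y\}$ ($\infty$ if no such curve). $g:A\to\mathbb{R}^m$ is intrinsic Lipschitz with constant $L$ if $\|g(x)-g(y)\|\le L\rho(x,y)$ for all $x,y\in A$. $f:\mathbb{R}^d\to\mathbb{R}^m$ is piecewise Lipschitz with exceptional set $\Theta$ if $\Theta$ is a hypersurface ($(d-1)$-dimensional submanifold of $\mathbb{R}^d$) with finitely many connected components and $f|_{\mathbb{R}^d\setminus\Theta}$ is intrinsic Lipschitz on $\mathbb{R}^d\setminus\Theta$. *)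

theory Defs
  imports "HOL-Analysis.Analysis"
begin

definition curve_length :: "(real \<Rightarrow> 'a::real_normed_vector) \<Rightarrow> ereal" where
  "curve_length \<gamma> =
     (SUP ts \<in> {ts. sorted_wrt (<) ts \<and> set ts \<subseteq> {0..1}}.
        ereal (\<Sum>k<length ts - 1. dist (\<gamma> (ts ! (Suc k))) (\<gamma> (ts ! k))))"

text \<open>Intrinsic metric of A (infinite if no curve in A joins x and y).\<close>
definition intrinsic_dist :: "'a::real_normed_vector set \<Rightarrow> 'a \<Rightarrow> 'a \<Rightarrow> ereal" where
  "intrinsic_dist A x y =
     (INF \<gamma> \<in> {\<gamma>. continuous_on {0..1} \<gamma> \<and> \<gamma> ` {0..1} \<subseteq> A \<and> \<gamma> 0 = x \<and> \<gamma> 1 = y}.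
        curve_length \<gamma>)"

definition intrinsic_lipschitz ::
    "'a::real_normed_vector set \<Rightarrow> ('a \<Rightarrow> 'b::real_normed_vector) \<Rightarrow> real \<Rightarrow> bool" where
  "intrinsic_lipschitz A g L \<longleftrightarrow>
     (\<forall>x\<in>A. \<forall>y\<in>A. intrinsic_dist A x y < \<infinity> \<longrightarrow>
        dist (g x) (g y) \<le> L * real_of_ereal (intrinsic_dist A x y))"

text \<open>Hypersurface: (d-1)-dimensional embedded C^1 submanifold of the euclidean space 'a,
  via local straightening charts onto a coordinate hyperplane.\<close>
definition hypersurface :: "'a::euclidean_space set \<Rightarrow> bool" where
  "hypersurface \<Theta> \<longleftrightarrow>
     (\<forall>p\<in>\<Theta>. \<exists>U V (\<psi>::'a\<Rightarrow>'a) (\<phi>::'a\<Rightarrow>'a) \<psi>' \<phi>' b.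
        open U \<and> open V \<and> p \<in> U \<and> b \<in> Basis \<and>
        homeomorphism U V \<psi> \<phi> \<and>
        (\<forall>x\<in>U. (\<psi> has_derivative blinfun_apply (\<psi>' x)) (at x)) \<and> continuous_on U \<psi>' \<and>
        (\<forall>y\<in>V. (\<phi> has_derivative blinfun_apply (\<phi>' y)) (at y)) \<and> continuous_on V \<phi>' \<and>
        \<psi> ` (\<Theta> \<inter> U) = {y \<in> V. y \<bullet> b = 0})"

definition piecewise_lipschitz ::
    "('a::euclidean_space \<Rightarrow> 'b::real_normed_vector) \<Rightarrow> 'a set \<Rightarrow> bool" where
  "piecewise_lipschitz f \<Theta> \<longleftrightarrow>
     hypersurface \<Theta> \<and> finite (components \<Theta>) \<and>
     (\<exists>L. intrinsic_lipschitz (UNIV - \<Theta>) f L)"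

end

theory Submission
  imports Defs
begin

text \<open>Join x to y by a curve \<gamma> of length below |x - y| + \<eta> that meets \<Theta> in finitely
  many points. On a subarc avoiding \<Theta> the intrinsic distance of the endpoints is at most
  the arc length, so f grows by at most L times that length. The crossings are removed one
  point q at a time: cut \<gamma> at its first and last visits to q; the two outer pieces meet
  fewer points of \<Theta>, and the loop in between costs nothing because f \<circ> \<gamma> takes the same
  value at both of its ends. Continuity of f passes the bound to the closed subarcs touching
  \<Theta>, and superadditivity of arc length adds the pieces up.\<close>

fun chord_sum :: "(real \<Rightarrow> 'a::real_normed_vector) \<Rightarrow> real list \<Rightarrow> real" where
  "chord_sum \<gamma> (s # t # ts) = dist (\<gamma> t) (\<gamma> s) + chord_sum \<gamma> (t # ts)"
| "chord_sum \<gamma> _ = 0"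

lemma sum_chords_eq_chord_sum:
  "(\<Sum>k<length ts - 1. dist (\<gamma> (ts ! Suc k)) (\<gamma> (ts ! k))) = chord_sum \<gamma> ts"
proof (induction \<gamma> ts rule: chord_sum.induct)
  case (1 \<gamma> s t ts)
  have "length (s # t # ts) - 1 = Suc (length (t # ts) - 1)" by simp
  then show ?case using 1 by (simp only: sum.lessThan_Suc_shift) simp
qed auto

lemma chord_sum_append_Cons:
  "chord_sum \<gamma> (xs @ [c]) + chord_sum \<gamma> (c # ys) = chord_sum \<gamma> (xs @ c # ys)"
proof (induction xs)
  case (Cons x xs)
  then show ?case by (cases xs) auto
qed simp

lemma chord_sum_append_ge: "chord_sum \<gamma> xs + chord_sum \<gamma> ys \<le> chord_sum \<gamma> (xs @ ys)"
proof (induction xs)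
  case (Cons x xs)
  have "chord_sum \<gamma> ys \<le> chord_sum \<gamma> (x # ys)" by (cases ys) auto
  with Cons show ?case by (cases xs) auto
qed simp

lemma chord_sum_map: "chord_sum (\<lambda>t. \<gamma> (\<phi> t)) ts = chord_sum \<gamma> (map \<phi> ts)"
  by (induction "\<lambda>t. \<gamma> (\<phi> t)" ts rule: chord_sum.induct) auto

definition arc_length :: "(real \<Rightarrow> 'a::real_normed_vector) \<Rightarrow> real \<Rightarrow> real \<Rightarrow> ereal" where
  "arc_length \<gamma> a b =
     (SUP ts \<in> {ts. sorted_wrt (<) ts \<and> set ts \<subseteq> {a..b}}. ereal (chord_sum \<gamma> ts))"

lemma curve_length_eq_arc_length: "curve_length \<gamma> = arc_length \<gamma> 0 1"
  unfolding curve_length_def arc_length_def sum_chords_eq_chord_sum ..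

lemma chord_sum_le_arc_length:
  "sorted_wrt (<) ts \<Longrightarrow> set ts \<subseteq> {a..b} \<Longrightarrow> ereal (chord_sum \<gamma> ts) \<le> arc_length \<gamma> a b"
  unfolding arc_length_def by (rule SUP_upper) auto

lemma arc_length_nonneg: "0 \<le> arc_length \<gamma> a b"
  using chord_sum_le_arc_length[of "[]"] by (simp add: zero_ereal_def)

lemma arc_length_mono: "a \<le> c \<Longrightarrow> d \<le> b \<Longrightarrow> arc_length \<gamma> c d \<le> arc_length \<gamma> a b"
  unfolding arc_length_def by (rule SUP_subset_mono) auto

lemma dist_le_curve_length: "ereal (dist (\<gamma> 0) (\<gamma> 1)) \<le> curve_length \<gamma>"
  unfolding curve_length_eq_arc_length
  using chord_sum_le_arc_length[of "[0, 1]" 0 1 \<gamma>] by (simp add: dist_commute)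

lemma arc_length_finite:
  assumes "curve_length \<gamma> < \<infinity>" "0 \<le> a" "b \<le> 1"
  shows "arc_length \<gamma> a b = ereal (real_of_ereal (arc_length \<gamma> a b))"
proof -
  have "arc_length \<gamma> a b \<le> curve_length \<gamma>"
    unfolding curve_length_eq_arc_length using assms by (intro arc_length_mono)
  then have "arc_length \<gamma> a b < \<infinity>" using assms(1) by (rule order.strict_trans1)
  with arc_length_nonneg[of \<gamma> a b] show ?thesis
    by (simp add: ereal_real)
qed

lemma merge_adjacent_partitions:
  assumes "a \<le> c" "c \<le> b"
    and ts1: "sorted_wrt (<) ts1" "set ts1 \<subseteq> {a..c}"
    and ts2: "sorted_wrt (<) ts2" "set ts2 \<subseteq> {c..b}"
  obtains ts where "sorted_wrt (<) ts" "set ts \<subseteq> {a..b}"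
    "chord_sum \<gamma> ts1 + chord_sum \<gamma> ts2 \<le> chord_sum \<gamma> ts"
proof (cases "c \<in> set ts1 \<and> c \<in> set ts2")
  case True
  then obtain xs zs us vs where split: "ts1 = xs @ c # zs" "ts2 = us @ c # vs"
    by (meson split_list)
  have "\<forall>z\<in>set zs. c < z" "\<forall>u\<in>set us. u < c"
    using ts1(1) ts2(1) unfolding split by (simp_all add: sorted_wrt_append)
  moreover have "\<forall>z\<in>set zs. z \<le> c" "\<forall>u\<in>set us. c \<le> u"
    using ts1(2) ts2(2) unfolding split by auto
  ultimately have "zs = []" "us = []"
    by (metis all_not_in_conv not_less set_empty)+
  then have "chord_sum \<gamma> ts1 + chord_sum \<gamma> ts2 = chord_sum \<gamma> (xs @ c # vs)"
    using split chord_sum_append_Cons by simp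
  moreover have "sorted_wrt (<) (xs @ c # vs)" "set (xs @ c # vs) \<subseteq> {a..b}"
    using ts1 ts2 unfolding split \<open>zs = []\<close> \<open>us = []\<close>
    by (auto simp: sorted_wrt_append intro: less_trans)
  ultimately show ?thesis using that by simp
next
  case False
  have "\<forall>x\<in>set ts1. \<forall>y\<in>set ts2. x < y"
  proof (intro ballI)
    fix x y assume "x \<in> set ts1" "y \<in> set ts2"
    with ts1 ts2 False have "x \<le> c" "c \<le> y" "x \<noteq> c \<or> y \<noteq> c" by auto
    then show "x < y" by linarith
  qed
  with ts1(1) ts2(1) have "sorted_wrt (<) (ts1 @ ts2)"
    by (simp add: sorted_wrt_append)
  moreover have "set (ts1 @ ts2) \<subseteq> {a..b}"
    using ts1(2) ts2(2) assms by force
  ultimately show ?thesis by (rule that[OF _ _ chord_sum_append_ge])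
qed

lemma arc_length_superadditive:
  assumes "a \<le> c" "c \<le> b"
  shows "arc_length \<gamma> a c + arc_length \<gamma> c b \<le> arc_length \<gamma> a b"
proof -
  have "arc_length \<gamma> a c + arc_length \<gamma> c b
      = (SUP ts1 \<in> {ts. sorted_wrt (<) ts \<and> set ts \<subseteq> {a..c}}.
           ereal (chord_sum \<gamma> ts1) + arc_length \<gamma> c b)"
    unfolding arc_length_def[of \<gamma> a c]
    by (rule SUP_ereal_add_left[symmetric])
      (auto intro!: exI[of _ "[]"] simp: arc_length_nonneg[THEN order_trans[rotated]])
  also have "\<dots> \<le> arc_length \<gamma> a b"
  proof (rule SUP_least)
    fix ts1 assume ts1: "ts1 \<in> {ts. sorted_wrt (<) ts \<and> set ts \<subseteq> {a..c}}"
    have "arc_length \<gamma> c b + ereal (chord_sum \<gamma> ts1)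
        = (SUP ts2 \<in> {ts. sorted_wrt (<) ts \<and> set ts \<subseteq> {c..b}}.
             ereal (chord_sum \<gamma> ts2) + ereal (chord_sum \<gamma> ts1))"
      unfolding arc_length_def[of \<gamma> c b]
      by (rule SUP_ereal_add_left[symmetric]) (auto intro!: exI[of _ "[]"])
    also have "\<dots> \<le> arc_length \<gamma> a b"
    proof (rule SUP_least)
      fix ts2 assume ts2: "ts2 \<in> {ts. sorted_wrt (<) ts \<and> set ts \<subseteq> {c..b}}"
      obtain ts where "sorted_wrt (<) ts" "set ts \<subseteq> {a..b}"
        "chord_sum \<gamma> ts1 + chord_sum \<gamma> ts2 \<le> chord_sum \<gamma> ts"
        using merge_adjacent_partitions[OF assms, of ts1 ts2 \<gamma>] ts1 ts2 by auto
      then have "ereal (chord_sum \<gamma> ts2) + ereal (chord_sum \<gamma> ts1) \<le> ereal (chord_sum \<gamma> ts)"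
        by simp
      also have "\<dots> \<le> arc_length \<gamma> a b"
        by (rule chord_sum_le_arc_length) fact+
      finally show "ereal (chord_sum \<gamma> ts2) + ereal (chord_sum \<gamma> ts1) \<le> arc_length \<gamma> a b" .
    qed
    finally show "ereal (chord_sum \<gamma> ts1) + arc_length \<gamma> c b \<le> arc_length \<gamma> a b"
      by (simp add: add.commute)
  qed
  finally show ?thesis .
qed

lemma affine_image_unit_interval:
  fixes a b :: real
  assumes "a \<le> b"
  shows "(\<lambda>t. a + (b - a) * t) ` {0..1} \<subseteq> {a..b}"
proof
  fix x assume "x \<in> (\<lambda>t. a + (b - a) * t) ` {0..1}"
  then obtain t where "0 \<le> t" "t \<le> 1" "x = a + (b - a) * t" by auto
  moreover from this assms have "0 \<le> (b - a) * t" "(b - a) * t \<le> b - a"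
    using mult_left_mono[of t 1 "b - a"] by auto
  ultimately show "x \<in> {a..b}" by simp
qed

lemma curve_length_rescale_le:
  assumes "a < b"
  shows "curve_length (\<lambda>t. \<gamma> (a + (b - a) * t)) \<le> arc_length \<gamma> a b"
  unfolding curve_length_eq_arc_length arc_length_def[of "\<lambda>t. \<gamma> (a + (b - a) * t)"]
proof (rule SUP_least)
  fix ts :: "real list" assume ts: "ts \<in> {ts. sorted_wrt (<) ts \<and> set ts \<subseteq> {0..1}}"
  let ?\<phi> = "\<lambda>t. a + (b - a) * t"
  have "sorted_wrt (<) (map ?\<phi> ts)"
    using ts assms by (auto simp: sorted_wrt_map elim!: sorted_wrt_mono_rel[rotated])
  moreover have "set (map ?\<phi> ts) \<subseteq> {a..b}"
    using ts affine_image_unit_interval[of a b] assms by auto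
  ultimately show "ereal (chord_sum (\<lambda>t. \<gamma> (?\<phi> t)) ts) \<le> arc_length \<gamma> a b"
    by (subst chord_sum_map[of \<gamma> ?\<phi> ts]) (rule chord_sum_le_arc_length)
qed

lemma dist_le_intrinsic_dist: "ereal (dist x y) \<le> intrinsic_dist A x y"
  unfolding intrinsic_dist_def using dist_le_curve_length by (fastforce intro: INF_greatest)

lemma intrinsic_dist_le_arc_length:
  assumes "continuous_on {0..1} \<gamma>" "0 \<le> a" "a < b" "b \<le> 1" "\<gamma> ` {a..b} \<subseteq> A"
  shows "intrinsic_dist A (\<gamma> a) (\<gamma> b) \<le> arc_length \<gamma> a b"
proof -
  let ?\<delta> = "\<lambda>t. \<gamma> (a + (b - a) * t)"
  have img: "(\<lambda>t. a + (b - a) * t) ` {0..1} \<subseteq> {a..b}"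
    using affine_image_unit_interval assms(3) by simp
  have "continuous_on {0..1} (\<lambda>t. a + (b - a) * t)" by (intro continuous_intros)
  moreover have "(\<lambda>t. a + (b - a) * t) ` {0..1} \<subseteq> {0..1}" using img assms by auto
  ultimately have "continuous_on {0..1} ?\<delta>" by (rule continuous_on_compose2[OF assms(1)])
  moreover have "?\<delta> ` {0..1} \<subseteq> A" using img assms(5) by auto
  ultimately have "intrinsic_dist A (\<gamma> a) (\<gamma> b) \<le> curve_length ?\<delta>"
    unfolding intrinsic_dist_def by (intro INF_lower) auto
  also have "\<dots> \<le> arc_length \<gamma> a b" by (rule curve_length_rescale_le[OF assms(3)])
  finally show ?thesis .
qed

lemma intrinsic_dist_subarc:
  assumes "continuous_on {0..1} \<gamma>" "curve_length \<gamma> < \<infinity>"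
    and "0 \<le> a" "a < b" "b \<le> 1" "\<gamma> ` {a..b} \<subseteq> A"
  obtains r where "intrinsic_dist A (\<gamma> a) (\<gamma> b) = ereal r"
    "dist (\<gamma> a) (\<gamma> b) \<le> r" "r \<le> real_of_ereal (arc_length \<gamma> a b)"
proof -
  let ?\<rho> = "intrinsic_dist A (\<gamma> a) (\<gamma> b)"
  have upper: "?\<rho> \<le> ereal (real_of_ereal (arc_length \<gamma> a b))"
    using intrinsic_dist_le_arc_length[of \<gamma> a b A] arc_length_finite[of \<gamma> a b] assms
    by simp
  have lower: "ereal (dist (\<gamma> a) (\<gamma> b)) \<le> ?\<rho>" by (rule dist_le_intrinsic_dist)
  from upper lower show ?thesis
    by (cases ?\<rho>) (auto intro: that)
qed

lemma intrinsic_lipschitz_subarc: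
  assumes "intrinsic_lipschitz A f L"
    and "continuous_on {0..1} \<gamma>" "curve_length \<gamma> < \<infinity>"
    and "0 \<le> a" "a < b" "b \<le> 1" "\<gamma> ` {a..b} \<subseteq> A"
  obtains r where "dist (\<gamma> a) (\<gamma> b) \<le> r" "r \<le> real_of_ereal (arc_length \<gamma> a b)"
    "dist (f (\<gamma> a)) (f (\<gamma> b)) \<le> L * r"
proof -
  obtain r where r: "intrinsic_dist A (\<gamma> a) (\<gamma> b) = ereal r"
    "dist (\<gamma> a) (\<gamma> b) \<le> r" "r \<le> real_of_ereal (arc_length \<gamma> a b)"
    using intrinsic_dist_subarc[OF assms(2-)] .
  have "\<gamma> a \<in> A" "\<gamma> b \<in> A" using assms(4-7) by auto
  with assms(1) r(1) have "dist (f (\<gamma> a)) (f (\<gamma> b)) \<le> L * r"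
    unfolding intrinsic_lipschitz_def by force
  with r(2,3) show ?thesis by (rule that)
qed

lemma dist_le_if_dist_le_inside:
  fixes h :: "real \<Rightarrow> 'a::metric_space"
  assumes h: "continuous_on {a..b} h" and "a < b"
    and inside: "\<And>s t. a < s \<Longrightarrow> s < t \<Longrightarrow> t < b \<Longrightarrow> dist (h s) (h t) \<le> C"
  shows "dist (h a) (h b) \<le> C"
proof -
  have right_end: "dist (h s) (h b) \<le> C" if "a < s" "s < b" for s
  proof -
    have "continuous_on (closure {s<..<b}) (\<lambda>t. dist (h s) (h t))"
      using that by (auto intro!: continuous_intros continuous_on_subset[OF h])
    then show ?thesis
      by (rule continuous_le_on_closure) (use that inside in auto)
  qed
  have "continuous_on (closure {a<..<b}) (\<lambda>s. dist (h s) (h b))"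
    using assms(2) by (auto intro!: continuous_intros h)
  then show ?thesis
    by (rule continuous_le_on_closure) (use assms(2) right_end in auto)
qed

lemma first_and_last_visit:
  fixes \<gamma> :: "real \<Rightarrow> 'a::t1_space"
  assumes "continuous_on {a..b} \<gamma>" "t \<in> {a..b}"
  obtains a' b' where "a \<le> a'" "a' \<le> b'" "b' \<le> b" "\<gamma> a' = \<gamma> t" "\<gamma> b' = \<gamma> t"
    "\<And>s. s \<in> {a..<a'} \<union> {b'<..b} \<Longrightarrow> \<gamma> s \<noteq> \<gamma> t"
proof -
  define K where "K = {s \<in> {a..b}. \<gamma> s = \<gamma> t}"
  have "closed K" unfolding K_def
    by (rule continuous_closed_preimage_constant) (use assms in auto)
  have "K \<noteq> {}" using assms(2) unfolding K_def by blast
  have K_bounds: "K \<subseteq> {a..b}" unfolding K_def by auto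
  then have "bdd_below K" "bdd_above K"
    by (metis bdd_below_Icc bdd_below_mono, metis bdd_above_Icc bdd_above_mono)
  have first: "Inf K \<in> K"
    using closed_contains_Inf[OF \<open>K \<noteq> {}\<close> \<open>bdd_below K\<close> \<open>closed K\<close>] .
  have last: "Sup K \<in> K"
    using closed_contains_Sup[OF \<open>K \<noteq> {}\<close> \<open>bdd_above K\<close> \<open>closed K\<close>] .
  have ordered: "Inf K \<le> Sup K"
    using cInf_le_cSup[OF \<open>K \<noteq> {}\<close> \<open>bdd_above K\<close> \<open>bdd_below K\<close>] .
  have not_visited: "\<gamma> s \<noteq> \<gamma> t" if "s \<in> {a..<Inf K} \<union> {Sup K<..b}" for s
  proof -
    have "s \<notin> K"
      using that cInf_lower[OF _ \<open>bdd_below K\<close>, of s] cSup_upper[OF _ \<open>bdd_above K\<close>, of s]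
      by auto
    moreover have "s \<in> {a..b}" using that first last K_bounds by auto
    ultimately show ?thesis unfolding K_def by simp
  qed
  have "a \<le> Inf K" "Sup K \<le> b" "\<gamma> (Inf K) = \<gamma> t" "\<gamma> (Sup K) = \<gamma> t"
    using first last unfolding K_def by auto
  with ordered not_visited show ?thesis using that by blast
qed

text \<open>The weight w plays the role of L times arc length; with w = 0 the same argument
  shows that a negative intrinsic Lipschitz constant is impossible.\<close>

context
  fixes \<gamma> :: "real \<Rightarrow> 'a::t1_space" and h :: "real \<Rightarrow> 'b::metric_space"
    and w :: "real \<Rightarrow> real \<Rightarrow> real" and S :: "'a set"
  assumes \<gamma>_cont: "continuous_on {0..1} \<gamma>" and h_cont: "continuous_on {0..1} h"
    and h_factors: "\<And>s t. s \<in> {0..1} \<Longrightarrow> t \<in> {0..1} \<Longrightarrow> \<gamma> s = \<gamma> t \<Longrightarrow> h s = h t"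
    and w_nonneg: "\<And>a b. 0 \<le> a \<Longrightarrow> a \<le> b \<Longrightarrow> b \<le> 1 \<Longrightarrow> 0 \<le> w a b"
    and w_mono: "\<And>a b c d. 0 \<le> a \<Longrightarrow> a \<le> c \<Longrightarrow> c \<le> d \<Longrightarrow> d \<le> b \<Longrightarrow> b \<le> 1 \<Longrightarrow>
      w c d \<le> w a b"
    and w_superadditive: "\<And>a b c. 0 \<le> a \<Longrightarrow> a \<le> c \<Longrightarrow> c \<le> b \<Longrightarrow> b \<le> 1 \<Longrightarrow>
      w a c + w c b \<le> w a b"
    and dist_le_w_off_S: "\<And>a b. 0 \<le> a \<Longrightarrow> a < b \<Longrightarrow> b \<le> 1 \<Longrightarrow> \<gamma> ` {a..b} \<inter> S = {} \<Longrightarrow>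
      dist (h a) (h b) \<le> w a b"
begin

lemma dist_le_weight_if_no_crossing:
  assumes "0 \<le> a" "a \<le> b" "b \<le> 1" "\<gamma> ` {a<..<b} \<inter> S = {}"
  shows "dist (h a) (h b) \<le> w a b"
proof (cases "a = b")
  case True
  then show ?thesis using w_nonneg assms by simp
next
  case False
  have "continuous_on {a..b} h"
    using assms by (auto intro: continuous_on_subset[OF h_cont])
  moreover from False assms(2) have "a < b" by simp
  moreover have "dist (h s) (h t) \<le> w a b" if "a < s" "s < t" "t < b" for s t
  proof -
    have "{s..t} \<subseteq> {a<..<b}" using that by auto
    then have "\<gamma> ` {s..t} \<inter> S = {}" using assms(4) by blast
    then have "dist (h s) (h t) \<le> w s t" using dist_le_w_off_S that assms by simp
    also have "\<dots> \<le> w a b" using w_mono that assms by simp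
    finally show ?thesis .
  qed
  ultimately show ?thesis by (rule dist_le_if_dist_le_inside)
qed

lemma dist_le_weight_if_crossings_in:
  assumes "finite P"
  shows "0 \<le> a \<Longrightarrow> a \<le> b \<Longrightarrow> b \<le> 1 \<Longrightarrow> \<gamma> ` {a<..<b} \<inter> S \<subseteq> P \<Longrightarrow>
    dist (h a) (h b) \<le> w a b"
  using assms
proof (induction P arbitrary: a b rule: finite_induct)
  case empty
  then show ?case using dist_le_weight_if_no_crossing by blast
next
  case (insert q P)
  show ?case
  proof (cases "q \<in> \<gamma> ` {a<..<b}")
    case False
    with insert.prems show ?thesis by (intro insert.IH) auto
  next
    case True
    then obtain t where t: "t \<in> {a<..<b}" "\<gamma> t = q" by auto
    have "continuous_on {a..b} \<gamma>"
      using insert.prems by (auto intro: continuous_on_subset[OF \<gamma>_cont])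
    then obtain a' b' where visits: "a \<le> a'" "a' \<le> b'" "b' \<le> b" "\<gamma> a' = q" "\<gamma> b' = q"
      and not_visited: "\<And>s. s \<in> {a..<a'} \<union> {b'<..b} \<Longrightarrow> \<gamma> s \<noteq> q"
      using first_and_last_visit[of a b \<gamma> t] t by auto
    have crossings_in_P: "\<gamma> ` I \<inter> S \<subseteq> P"
      if "I \<subseteq> {a<..<b}" "\<And>s. s \<in> I \<Longrightarrow> \<gamma> s \<noteq> q" for I
      using that insert.prems(4) by blast
    have "\<gamma> ` {a<..<a'} \<inter> S \<subseteq> P" "\<gamma> ` {b'<..<b} \<inter> S \<subseteq> P"
      by (rule crossings_in_P; use visits not_visited in auto)+
    then have "dist (h a) (h a') \<le> w a a'" "dist (h b') (h b) \<le> w b' b"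
      using insert.prems visits by (auto intro: insert.IH)
    moreover have "h a' = h b'"
      using h_factors visits insert.prems by auto
    ultimately have "dist (h a) (h b) \<le> w a a' + w b' b"
      using dist_triangle[of "h a" "h b" "h a'"] by simp
    also have "\<dots> \<le> w a a' + w a' b"
      using w_mono visits insert.prems by simp
    also have "\<dots> \<le> w a b"
      using w_superadditive visits insert.prems by simp
    finally show ?thesis .
  qed
qed

lemma dist_le_weight_if_finitely_many_crossings:
  assumes "finite (\<gamma> ` {0..1} \<inter> S)"
  shows "dist (h 0) (h 1) \<le> w 0 1"
  by (rule dist_le_weight_if_crossings_in[OF assms]) auto

end

lemma curve_length_less_ereal:
  assumes "curve_length \<gamma> < ereal c"
  shows "curve_length \<gamma> < \<infinity>" "real_of_ereal (curve_length \<gamma>) < c"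
  using assms arc_length_nonneg[of \<gamma> 0 1] unfolding curve_length_eq_arc_length
  by (cases "arc_length \<gamma> 0 1"; simp)+

lemma intrinsic_lipschitz_const_nonneg:
  assumes f: "intrinsic_lipschitz (UNIV - \<Theta>) f L"
    and \<gamma>: "continuous_on {0..1} \<gamma>" "curve_length \<gamma> < \<infinity>" "finite (\<gamma> ` {0..1} \<inter> \<Theta>)"
    and "\<gamma> 0 \<noteq> \<gamma> 1"
  shows "0 \<le> L"
proof (rule ccontr)
  assume "\<not> 0 \<le> L"
  have "dist (\<gamma> 0) (\<gamma> 1) \<le> 0"
  proof (rule dist_le_weight_if_finitely_many_crossings
      [where h = \<gamma> and w = "\<lambda>_ _. 0" and S = \<Theta>])
    fix a b :: real assume ab: "0 \<le> a" "a < b" "b \<le> 1" "\<gamma> ` {a..b} \<inter> \<Theta> = {}"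
    then obtain r where "dist (\<gamma> a) (\<gamma> b) \<le> r" "dist (f (\<gamma> a)) (f (\<gamma> b)) \<le> L * r"
      using intrinsic_lipschitz_subarc[OF f \<gamma>(1,2), of a b] by blast
    moreover from this have "0 \<le> L * r" by (meson order_trans zero_le_dist)
    with \<open>\<not> 0 \<le> L\<close> have "r \<le> 0" by (simp add: zero_le_mult_iff)
    ultimately show "dist (\<gamma> a) (\<gamma> b) \<le> 0" by linarith
  qed (use \<gamma> in auto)
  with \<open>\<gamma> 0 \<noteq> \<gamma> 1\<close> show False by simp
qed

lemma dist_le_curve_length_if_intrinsic_lipschitz:
  assumes f: "intrinsic_lipschitz (UNIV - \<Theta>) f L" "0 \<le> L" "continuous_on (\<gamma> ` {0..1}) f"
    and \<gamma>: "continuous_on {0..1} \<gamma>" "curve_length \<gamma> < \<infinity>" "finite (\<gamma> ` {0..1} \<inter> \<Theta>)"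
  shows "dist (f (\<gamma> 0)) (f (\<gamma> 1)) \<le> L * real_of_ereal (curve_length \<gamma>)"
proof -
  define len where "len a b = real_of_ereal (arc_length \<gamma> a b)" for a b
  have arc_length_eq: "arc_length \<gamma> a b = ereal (len a b)" if "0 \<le> a" "b \<le> 1" for a b
    unfolding len_def using arc_length_finite[OF \<gamma>(2) that] .
  have "dist (f (\<gamma> 0)) (f (\<gamma> 1)) \<le> L * len 0 1"
  proof (rule dist_le_weight_if_finitely_many_crossings
      [where h = "\<lambda>t. f (\<gamma> t)" and w = "\<lambda>a b. L * len a b" and S = \<Theta>])
    show "continuous_on {0..1} (\<lambda>t. f (\<gamma> t))"
      using continuous_on_compose2[OF f(3) \<gamma>(1)] by simp
    fix a b c d :: real
    show "0 \<le> a \<Longrightarrow> a \<le> b \<Longrightarrow> b \<le> 1 \<Longrightarrow> 0 \<le> L * len a b"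
      using arc_length_nonneg[of \<gamma> a b] arc_length_eq[of a b] f(2) by simp
    show "0 \<le> a \<Longrightarrow> a \<le> c \<Longrightarrow> c \<le> d \<Longrightarrow> d \<le> b \<Longrightarrow> b \<le> 1 \<Longrightarrow> L * len c d \<le> L * len a b"
      using arc_length_mono[of a c d b \<gamma>] arc_length_eq[of a b] arc_length_eq[of c d] f(2)
      by (simp add: mult_left_mono)
    show "0 \<le> a \<Longrightarrow> a \<le> c \<Longrightarrow> c \<le> b \<Longrightarrow> b \<le> 1 \<Longrightarrow> L * len a c + L * len c b \<le> L * len a b"
      using arc_length_superadditive[of a c b \<gamma>] arc_length_eq[of a c] arc_length_eq[of c b]
        arc_length_eq[of a b] f(2)
      by (simp add: distrib_left[symmetric] mult_left_mono)
    assume "0 \<le> a" "a < b" "b \<le> 1" "\<gamma> ` {a..b} \<inter> \<Theta> = {}"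
    then obtain r where "r \<le> len a b" "dist (f (\<gamma> a)) (f (\<gamma> b)) \<le> L * r"
      using intrinsic_lipschitz_subarc[OF f(1) \<gamma>(1,2), of a b] unfolding len_def by blast
    with f(2) show "dist (f (\<gamma> a)) (f (\<gamma> b)) \<le> L * len a b"
      by (meson mult_left_mono order_trans)
  qed (use \<gamma> in auto)
  then show ?thesis by (simp add: len_def curve_length_eq_arc_length)
qed

lemma lipschitz_on_if_dist_le_plus_epsilon:
  assumes "0 \<le> L"
    and "\<And>x y \<eta>. x \<in> S \<Longrightarrow> y \<in> S \<Longrightarrow> 0 < \<eta> \<Longrightarrow> dist (f x) (f y) \<le> L * (dist x y + \<eta>)"
  shows "L-lipschitz_on S f"
  unfolding lipschitz_on_def
proof (intro conjI ballI assms(1))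
  fix x y assume "x \<in> S" "y \<in> S"
  show "dist (f x) (f y) \<le> L * dist x y"
  proof (rule field_le_epsilon)
    fix \<epsilon> :: real assume "0 < \<epsilon>"
    with assms(1) have "L * (\<epsilon> / (L + 1)) \<le> \<epsilon>" by (simp add: field_simps)
    with assms(2)[OF \<open>x \<in> S\<close> \<open>y \<in> S\<close>, of "\<epsilon> / (L + 1)"] \<open>0 < \<epsilon>\<close> assms(1)
    show "dist (f x) (f y) \<le> L * dist x y + \<epsilon>" by (simp add: distrib_left)
  qed
qed

theorem lemma3p6:
  fixes f :: "'a::euclidean_space \<Rightarrow> 'b::euclidean_space" and \<Theta> :: "'a set"
  assumes cont: "\<forall>x. isCont f x"
    and pl: "piecewise_lipschitz f \<Theta>"
    and curves: "\<forall>x y. \<forall>\<eta>>0. \<exists>\<gamma>. continuous_on {0..1} \<gamma> \<and> \<gamma> 0 = x \<and> \<gamma> 1 = y \<and>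
                   curve_length \<gamma> < ereal (dist x y + \<eta>) \<and> finite (\<gamma> ` {0..1} \<inter> \<Theta>)"
  shows "\<forall>L. intrinsic_lipschitz (UNIV - \<Theta>) f L \<longrightarrow> L-lipschitz_on UNIV f"
proof (intro allI impI)
  fix L assume f: "intrinsic_lipschitz (UNIV - \<Theta>) f L"
  obtain e :: 'a where "e \<in> Basis" using nonempty_Basis by blast
  then have "e \<noteq> 0" by auto
  then obtain \<gamma> where \<gamma>: "continuous_on {0..1} \<gamma>" "\<gamma> 0 \<noteq> \<gamma> 1"
    "curve_length \<gamma> < ereal (dist 0 e + 1)" "finite (\<gamma> ` {0..1} \<inter> \<Theta>)"
    using curves[rule_format, of 1 0 e] by auto
  have "0 \<le> L"
    using intrinsic_lipschitz_const_nonneg[OF f \<gamma>(1) curve_length_less_ereal(1)[OF \<gamma>(3)] \<gamma>(4,2)] .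
  then show "L-lipschitz_on UNIV f"
  proof (rule lipschitz_on_if_dist_le_plus_epsilon)
    fix x y and \<eta> :: real assume "0 < \<eta>"
    then obtain \<gamma> where \<gamma>: "continuous_on {0..1} \<gamma>" "\<gamma> 0 = x" "\<gamma> 1 = y"
      "curve_length \<gamma> < ereal (dist x y + \<eta>)" "finite (\<gamma> ` {0..1} \<inter> \<Theta>)"
      using curves by blast
    note short = curve_length_less_ereal[OF \<gamma>(4)]
    have "continuous_on (\<gamma> ` {0..1}) f"
      using cont by (simp add: continuous_at_imp_continuous_on)
    with f \<open>0 \<le> L\<close> \<gamma>(1,5) short(1)
    have "dist (f x) (f y) \<le> L * real_of_ereal (curve_length \<gamma>)"
      using dist_le_curve_length_if_intrinsic_lipschitz \<gamma>(2,3) by metis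
    also have "\<dots> \<le> L * (dist x y + \<eta>)"
      using short(2) \<open>0 \<le> L\<close> by (simp add: mult_left_mono)
    finally show "dist (f x) (f y) \<le> L * (dist x y + \<eta>)" .
  qed
qed

end
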